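(* Let $(g_d)_{d\ge1}$ be a sequence of integer-valued functions on the positive integers such that $g_1(n)=0$ for all $n\ge1$ and $g_d(n)=g_d(\operatorname{rad}(n))$ for all $n\ge1$ and all $d\mid n$. Then the integer sequence $a_n=\sum_{d\mid n} d\,\mu(d)\,g_d(n)$ is an Euler–Gauss sequence. In particular, for an arbitrary sequence $(f_p)$, indexed by primes $p$, of integer-valued functions on the positive integers, the sequence $a_n=\sum_{p\mid n,\ p\text{ prime}} p\, f_p(\operatorname{rad}(n))$ is an Euler–Gauss sequence.
   Context: $\mu$ is the Möbius function and $\operatorname{rad}(n)=\prod_{p\mid n,\,p\text{ prime}}p$ (with $\operatorname{rad}(1)=1$). For an integer sequence $(a_n)$ and $n\ge1$, $A_n^+=\prod_{d\mid n,\ \mu(d)=1} a_{n/d}$ and $A_n^-=\prod_{d\mid n,\ \mu(d)=-1} a_{n/d}$ (empty products equal $1$). An Euler–Gauss sequence is an integer sequence with $A_n^+\equiv A_n^-\pmod n$ for all $n\ge1$. *)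

theory Defs
  imports "HOL-Computational_Algebra.Computational_Algebra" "HOL-Number_Theory.Number_Theory"
begin

definition mu :: "nat \<Rightarrow> int" where
  "mu n = (if n = 0 then 0 else if squarefree n then (-1) ^ card (prime_factors n) else 0)"

definition rad :: "nat \<Rightarrow> nat" where
  "rad n = (\<Prod>p\<in>prime_factors n. p)"

definition A_plus :: "(nat \<Rightarrow> int) \<Rightarrow> nat \<Rightarrow> int" where
  "A_plus a n = (\<Prod>d\<in>{d. d dvd n \<and> mu d = 1}. a (n div d))"

definition A_minus :: "(nat \<Rightarrow> int) \<Rightarrow> nat \<Rightarrow> int" where
  "A_minus a n = (\<Prod>d\<in>{d. d dvd n \<and> mu d = -1}. a (n div d))"

definition euler_gauss :: "(nat \<Rightarrow> int) \<Rightarrow> bool" where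
  "euler_gauss a \<longleftrightarrow> (\<forall>n\<ge>1. [A_plus a n = A_minus a n] (mod int n))"

end

theory Submission
  imports Defs
begin

(* If p^2 divides n, toggling the factor p (d <-> d * p) is a bijection between the divisors
   of n with mu d = 1 and those with mu d = -1, and it does not change rad (n div d); so
   A_n^+ = A_n^- for every sequence that depends only on the radical.  If n is squarefree,
   the product that contains d = n has the factor a_1 = 0, while the other one contains
   a (n div (n div p)) = a_p for every prime p dividing n, so n = rad n divides it as soon as
   p divides a_p.  Both sequences of the corollary have these three properties. *)

lemma not_dvd_div_prime_if_squarefree:
  assumes "squarefree (d::nat)" "prime p" "p dvd d"
  shows "\<not> p dvd d div p"
proof
  assume "p dvd d div p"
  then have "p * p dvd d div p * p"
    by (rule mult_dvd_mono) simp
  then have "p ^ 2 dvd d"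
    using assms(3) by (simp add: power2_eq_square)
  then have "p dvd 1"
    by (rule squarefreeD[OF assms(1)])
  then show False
    using assms(2) by simp
qed

lemma prime_factors_mult_prime:
  assumes "prime (p::nat)" "\<not> p dvd d"
  shows "prime_factors (d * p) = insert p (prime_factors d)"
  using assms gr0I[of d] by (subst prime_factors_product) (auto simp: prime_factorization_prime)

lemma squarefree_mult_prime_iff:
  assumes "prime (p::nat)" "\<not> p dvd d"
  shows "squarefree (d * p) \<longleftrightarrow> squarefree d"
proof
  assume "squarefree (d * p)"
  then show "squarefree d" by (rule squarefree_mono[rotated]) simp
next
  assume "squarefree d"
  moreover have "coprime d p"
    using assms by (metis coprime_commute prime_imp_coprime)
  ultimately show "squarefree (d * p)"
    using assms squarefree_mult_coprime squarefree_prime by blast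
qed

lemma mu_mult_prime:
  assumes "prime (p::nat)" "\<not> p dvd d"
  shows "mu (d * p) = - mu d"
proof -
  have "d > 0" "p \<notin> prime_factors d"
    using assms by (auto simp: prime_factors_dvd intro: gr0I)
  then show ?thesis
    using assms prime_factors_mult_prime[OF assms] squarefree_mult_prime_iff[OF assms]
    by (auto simp: mu_def)
qed

lemma squarefree_if_mu_nonzero: "mu n \<noteq> 0 \<Longrightarrow> squarefree n"
  by (auto simp: mu_def split: if_splits)

lemma mu_squarefree_cases: "squarefree n \<Longrightarrow> mu n = 1 \<or> mu n = -1"
  by (auto simp: mu_def minus_one_power_iff intro: gr0I)

lemma rad_squarefree:
  assumes "squarefree n"
  shows "rad n = n"
proof -
  have "n \<noteq> 0" using assms by (auto intro: gr0I)
  have "rad n = (\<Prod>p\<in>prime_factors n. p ^ multiplicity p n)"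
    unfolding rad_def using assms \<open>n \<noteq> 0\<close>
    by (intro prod.cong) (auto simp: squarefree_factorial_semiring')
  also have "\<dots> = n"
    using prod_prime_factors[OF \<open>n \<noteq> 0\<close>] by simp
  finally show ?thesis .
qed

lemma prime_factors_mult_prime_dvd:
  assumes "prime (q::nat)" "q dvd m" "m \<noteq> 0"
  shows "prime_factors (q * m) = prime_factors m"
  using assms by (subst prime_factors_product) (auto simp: prime_factorization_prime prime_factors_dvd)

lemma rad_mult_prime_dvd:
  assumes "prime (q::nat)" "q dvd m" "m \<noteq> 0"
  shows "rad (q * m) = rad m"
  unfolding rad_def prime_factors_mult_prime_dvd[OF assms] ..

lemma squarefree_divisors_mult_prime_dvd:
  assumes "prime (q::nat)" "q dvd m"
  shows "{d. d dvd q * m \<and> squarefree d} = {d. d dvd m \<and> squarefree d}"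
proof -
  have "d dvd m" if d: "d dvd q * m" "squarefree d" for d
  proof (cases "q dvd d")
    case False
    then have "coprime d q"
      using assms(1) by (metis coprime_commute prime_imp_coprime)
    then show ?thesis
      using d(1) coprime_dvd_mult_right_iff by (metis mult.commute)
  next
    case True
    then obtain e where de: "d = e * q"
      by (metis dvd_def mult.commute)
    have "\<not> q dvd e"
      using not_dvd_div_prime_if_squarefree[OF d(2) assms(1) True] de assms(1)
      by (simp add: prime_gt_0_nat)
    then have "coprime e q"
      using assms(1) by (metis coprime_commute prime_imp_coprime)
    moreover have "e dvd m"
      using d(1) assms(1) de by (simp add: prime_gt_0_nat)
    ultimately show ?thesis
      using assms(2) de divides_mult by blast
  qed
  then show ?thesis by auto
qed

(* For n > 0 this says a n = a (rad n). *)
definition rad_invariant :: "(nat \<Rightarrow> 'a) \<Rightarrow> bool" where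
  "rad_invariant a \<longleftrightarrow> (\<forall>q m. prime q \<longrightarrow> q dvd m \<longrightarrow> a (q * m) = a m)"

lemma rad_invariantI:
  "(\<And>q m. prime q \<Longrightarrow> q dvd m \<Longrightarrow> m \<noteq> 0 \<Longrightarrow> a (q * m) = a m) \<Longrightarrow> rad_invariant a"
  unfolding rad_invariant_def by (metis mult_0_right)

lemma rad_invariantD: "rad_invariant a \<Longrightarrow> prime q \<Longrightarrow> q dvd m \<Longrightarrow> a (q * m) = a m"
  unfolding rad_invariant_def by blast

definition toggle_prime :: "nat \<Rightarrow> nat \<Rightarrow> nat" where
  "toggle_prime p d = (if p dvd d then d div p else d * p)"

lemma rad_invariant_div_mult_prime:
  assumes rad_inv: "rad_invariant a"
    and p: "prime p" "\<not> p dvd e" and n: "e dvd n" "p ^ 2 dvd n"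
  shows "e * p dvd n" "a (n div (e * p)) = a (n div e)"
proof -
  have "coprime p e"
    using p by (rule prime_imp_coprime)
  then have "coprime e (p ^ 2)"
    by (simp add: coprime_commute)
  then have "e * p ^ 2 dvd n"
    using n divides_mult by blast
  then obtain k where "n = e * p ^ 2 * k" ..
  then have k: "n = e * p * (p * k)"
    by (simp add: power2_eq_square mult.assoc)
  have "e > 0" "p > 0"
    using p by (auto intro: gr0I prime_gt_0_nat)
  then have "n div (e * p) = p * k" "n div e = p * (p * k)"
    using k by simp_all
  then show "a (n div (e * p)) = a (n div e)"
    using rad_invariantD[OF rad_inv p(1), of "p * k"] by simp
  show "e * p dvd n"
    using k by simp
qed

lemma toggle_prime_divisor:
  assumes rad_inv: "rad_invariant a"
    and p: "prime p" "p ^ 2 dvd n" and d: "d dvd n" "squarefree d"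
  shows "toggle_prime p d dvd n \<and> mu (toggle_prime p d) = - mu d
    \<and> toggle_prime p (toggle_prime p d) = d \<and> a (n div toggle_prime p d) = a (n div d)"
proof (cases "p dvd d")
  case True
  then obtain e where de: "d = e * p"
    by (metis dvd_def mult.commute)
  have "p > 0"
    using p(1) prime_gt_0_nat by blast
  then have e: "\<not> p dvd e"
    using not_dvd_div_prime_if_squarefree[OF d(2) p(1) True] de by simp
  then have toggle: "toggle_prime p (e * p) = e" "toggle_prime p e = e * p"
    using \<open>p > 0\<close> by (simp_all add: toggle_prime_def)
  have "e dvd n"
    using d(1) de dvd_mult_left by blast
  then show ?thesis
    unfolding de toggle
    using mu_mult_prime[OF p(1) e] rad_invariant_div_mult_prime[OF rad_inv p(1) e _ p(2)]
    by simp
next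
  case False
  have "toggle_prime p d = d * p" "toggle_prime p (d * p) = d"
    using False p(1) by (simp_all add: toggle_prime_def prime_gt_0_nat)
  then show ?thesis
    using mu_mult_prime[OF p(1) False] rad_invariant_div_mult_prime[OF rad_inv p(1) False d(1) p(2)]
    by simp
qed

lemma A_plus_eq_A_minus_if_square_dvd:
  assumes rad_inv: "rad_invariant a"
    and p: "prime p" "p ^ 2 dvd n"
  shows "A_plus a n = A_minus a n"
  unfolding A_plus_def A_minus_def
proof (rule prod.reindex_bij_witness[where i = "toggle_prime p" and j = "toggle_prime p"])
  fix d assume "d \<in> {d. d dvd n \<and> mu d = 1}"
  then show "toggle_prime p (toggle_prime p d) = d" "toggle_prime p d \<in> {d. d dvd n \<and> mu d = -1}"
    "a (n div toggle_prime p d) = a (n div d)"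
    using toggle_prime_divisor[OF rad_inv p, of d] squarefree_if_mu_nonzero[of d] by auto
next
  fix d assume "d \<in> {d. d dvd n \<and> mu d = -1}"
  then show "toggle_prime p (toggle_prime p d) = d" "toggle_prime p d \<in> {d. d dvd n \<and> mu d = 1}"
    using toggle_prime_divisor[OF rad_inv p, of d] squarefree_if_mu_nonzero[of d] by auto
qed

lemma int_dvd_prod_divisors_mu_if_squarefree:
  fixes a :: "nat \<Rightarrow> int"
  assumes a1: "a 1 = 0" and ap: "\<And>p. prime p \<Longrightarrow> int p dvd a p"
    and n: "squarefree n" and s: "s = 1 \<or> s = -1"
  shows "int n dvd (\<Prod>d\<in>{d. d dvd n \<and> mu d = s}. a (n div d))"
proof -
  let ?S = "{d. d dvd n \<and> mu d = s}"
  have "n > 0"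
    using n by (auto intro: gr0I)
  then have fin: "finite ?S"
    by simp
  have div_div: "n div (n div p) = p" if "p \<in> prime_factors n" for p
    using that \<open>n > 0\<close> div_div_eq_right[of p n n] by auto
  show ?thesis
  proof (cases "mu n = s")
    case True
    then have "(\<Prod>d\<in>?S. a (n div d)) = 0"
      using fin a1 \<open>n > 0\<close> by (intro prod_zero bexI[of _ n]) auto
    then show ?thesis
      by simp
  next
    case False
    then have mu_n: "mu n = - s"
      using mu_squarefree_cases[OF n] s by auto
    have "n div p \<in> ?S" if p: "p \<in> prime_factors n" for p
    proof -
      have "prime p" "p dvd n"
        using p by auto
      then have "n = (n div p) * p" "\<not> p dvd n div p"
        using not_dvd_div_prime_if_squarefree[OF n] by auto
      then have "mu n = - mu (n div p)" "n div p dvd n"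
        using mu_mult_prime[OF \<open>prime p\<close>] by (metis, metis dvd_triv_left)
      then show ?thesis
        using mu_n by auto
    qed
    then have sub: "(\<lambda>p. n div p) ` prime_factors n \<subseteq> ?S"
      by blast
    have inj: "inj_on (\<lambda>p. n div p) (prime_factors n)"
      using div_div by (rule inj_on_inverseI)
    have "int n = int (rad n)"
      using rad_squarefree[OF n] by simp
    also have "\<dots> = (\<Prod>p\<in>prime_factors n. int p)"
      by (simp add: rad_def of_nat_prod)
    also have "\<dots> dvd (\<Prod>p\<in>prime_factors n. a p)"
      by (meson ap in_prime_factors_imp_prime prod_dvd_prod)
    also have "\<dots> = (\<Prod>d\<in>(\<lambda>p. n div p) ` prime_factors n. a (n div d))"
      by (rule sym, rule prod.reindex_cong[OF inj refl]) (simp add: div_div)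
    also have "\<dots> dvd (\<Prod>d\<in>?S. a (n div d))"
      using fin sub by (rule prod_dvd_prod_subset)
    finally show ?thesis .
  qed
qed

lemma euler_gauss_if_rad_invariant:
  fixes a :: "nat \<Rightarrow> int"
  assumes rad_inv: "rad_invariant a"
    and a1: "a 1 = 0" and ap: "\<And>p. prime p \<Longrightarrow> int p dvd a p"
  shows "euler_gauss a"
  unfolding euler_gauss_def
proof (intro allI impI)
  fix n :: nat assume "n \<ge> 1"
  show "[A_plus a n = A_minus a n] (mod int n)"
  proof (cases "squarefree n")
    case True
    then have "int n dvd A_plus a n" "int n dvd A_minus a n"
      unfolding A_plus_def A_minus_def
      using int_dvd_prod_divisors_mu_if_squarefree[OF a1 ap] by auto
    then show ?thesis
      by (simp add: cong_def dvd_imp_mod_0)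
  next
    case False
    have "n \<noteq> 0"
      using \<open>n \<ge> 1\<close> by simp
    then obtain p where "prime p" "p ^ 2 dvd n"
      using False squarefree_factorial_semiring by blast
    then show ?thesis
      using A_plus_eq_A_minus_if_square_dvd[OF rad_inv] by simp
  qed
qed

lemma euler_gauss_sum_divisors_mu:
  fixes g :: "nat \<Rightarrow> nat \<Rightarrow> int"
  assumes g1: "\<And>n. n \<ge> 1 \<Longrightarrow> g 1 n = 0"
    and g_rad: "\<And>n d. n \<ge> 1 \<Longrightarrow> d dvd n \<Longrightarrow> g d n = g d (rad n)"
  shows "euler_gauss (\<lambda>n. \<Sum>d\<in>{d. d dvd n}. int d * mu d * g d n)"
proof (rule euler_gauss_if_rad_invariant[OF rad_invariantI])
  define a where "a n = (\<Sum>d\<in>{d. d dvd n}. int d * mu d * g d n)" for n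
  have a_rad: "a n = (\<Sum>d\<in>{d. d dvd n \<and> squarefree d}. int d * mu d * g d (rad n))"
    if "n > 0" for n
  proof -
    have "a n = (\<Sum>d\<in>{d. d dvd n \<and> squarefree d}. int d * mu d * g d n)"
      unfolding a_def using that
      by (intro sum.mono_neutral_right) (auto simp: mu_def)
    also have "\<dots> = (\<Sum>d\<in>{d. d dvd n \<and> squarefree d}. int d * mu d * g d (rad n))"
      using g_rad[of n] that by (intro sum.cong refl) simp
    finally show ?thesis .
  qed
  fix q m :: nat assume "prime q" "q dvd m" "m \<noteq> 0"
  then show "a (q * m) = a m"
    by (simp add: a_rad prime_gt_0_nat squarefree_divisors_mult_prime_dvd rad_mult_prime_dvd)
next
  show "(\<Sum>d\<in>{d. d dvd 1}. int d * mu d * g d 1) = 0"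
    using g1 by simp
next
  fix p :: nat assume p: "prime p"
  then have "{d. d dvd p} = {1, p}" "p \<noteq> 1"
    by (auto simp: prime_nat_iff)
  then have "(\<Sum>d\<in>{d. d dvd p}. int d * mu d * g d p) = int p * (mu p * g p p)"
    using g1[of p] prime_ge_1_nat[OF p] by simp
  then show "int p dvd (\<Sum>d\<in>{d. d dvd p}. int d * mu d * g d p)"
    by simp
qed

lemma euler_gauss_sum_prime_factors_rad:
  fixes f :: "nat \<Rightarrow> nat \<Rightarrow> int"
  shows "euler_gauss (\<lambda>n. \<Sum>p\<in>prime_factors n. int p * f p (rad n))"
proof (rule euler_gauss_if_rad_invariant[OF rad_invariantI])
  fix q m :: nat assume "prime q" "q dvd m" "m \<noteq> 0"
  then show "(\<Sum>p\<in>prime_factors (q * m). int p * f p (rad (q * m)))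
      = (\<Sum>p\<in>prime_factors m. int p * f p (rad m))"
    by (simp add: prime_factors_mult_prime_dvd rad_mult_prime_dvd)
next
  fix p :: nat assume "prime p"
  then show "int p dvd (\<Sum>q\<in>prime_factors p. int q * f q (rad p))"
    by (simp add: prime_factorization_prime)
qed simp

theorem corollary1:
  shows "(\<forall>g :: nat \<Rightarrow> nat \<Rightarrow> int.
            (\<forall>n\<ge>1. g 1 n = 0) \<and> (\<forall>n\<ge>1. \<forall>d. d dvd n \<longrightarrow> g d n = g d (rad n))
            \<longrightarrow> euler_gauss (\<lambda>n. \<Sum>d\<in>{d. d dvd n}. int d * mu d * g d n))
       \<and> (\<forall>f :: nat \<Rightarrow> nat \<Rightarrow> int.
            euler_gauss (\<lambda>n. \<Sum>p\<in>prime_factors n. int p * f p (rad n)))"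
  by (auto intro: euler_gauss_sum_divisors_mu euler_gauss_sum_prime_factors_rad)

end
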